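(* For $n\ge 4$ let $R_n$ be the tree obtained from the star $S_{n-1}$ by adding a new vertex adjacent to one leaf of $S_{n-1}$. Then $$av_1(R_n)=\frac{5n-13+(n+1)2^{n-4}}{2n-5+2^{n-3}}=\frac{n+1}{2}-\frac{n^2-\tfrac{13}{2}n+\tfrac{21}{2}}{2n-5+2^{n-3}}=\frac n2+\frac{2^{n-4}-n^2+\tfrac{15}{2}n-13}{2n-5+2^{n-3}}.$$ Consequently $av_1(R_n)<\frac{n+1}{2}$ for all $n\ge4$, $av_1(R_n)>\frac n2$ for all $n\ge 4$ with $n\notin\{6,7,8\}$, and $\lim_{n\to\infty}\big(av_1(R_n)-\frac{n+1}{2}\big)=0$.
   Context: For a graph $G=(V,E)$, a set $S\subseteq V$ is a $1$-nearly independent vertex set if the subgraph induced by $S$ has exactly one edge. $\sigma_1(G)$ is the number of such sets, $S_1(G)$ the sum of their sizes, and $av_1(G)=S_1(G)/\sigma_1(G)$. $S_m$ denotes the star on $m$ vertices. *)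

theory Defs
  imports Complex_Main
begin

definition simple_graph :: "'a set \<Rightarrow> 'a set set \<Rightarrow> bool" where
  "simple_graph V E \<longleftrightarrow> finite V \<and> (\<forall>e\<in>E. e \<subseteq> V \<and> card e = 2)"

definition induced_edges :: "'a set set \<Rightarrow> 'a set \<Rightarrow> 'a set set" where
  "induced_edges E S = {e \<in> E. e \<subseteq> S}"

definition nearly_indep_sets1 :: "'a set \<Rightarrow> 'a set set \<Rightarrow> 'a set set" where
  "nearly_indep_sets1 V E = {S. S \<subseteq> V \<and> card (induced_edges E S) = 1}"

definition sigma1 :: "'a set \<Rightarrow> 'a set set \<Rightarrow> nat" where
  "sigma1 V E = card (nearly_indep_sets1 V E)"

definition S1 :: "'a set \<Rightarrow> 'a set set \<Rightarrow> nat" where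
  "S1 V E = (\<Sum>S\<in>nearly_indep_sets1 V E. card S)"

definition av1 :: "'a set \<Rightarrow> 'a set set \<Rightarrow> real" where
  "av1 V E = real (S1 V E) / real (sigma1 V E)"

text \<open>The tree R_n: star S_{n-1} with centre 0 and leaves 1..n-2,
  plus a new vertex n-1 adjacent to the leaf 1.\<close>
definition R_vertices :: "nat \<Rightarrow> nat set" where
  "R_vertices n = {0..<n}"

definition R_edges :: "nat \<Rightarrow> nat set set" where
  "R_edges n = {{0, i} | i. 1 \<le> i \<and> i \<le> n - 2} \<union> {{1, n - 1}}"

end

theory Submission
  imports Defs "HOL-Real_Asymp.Real_Asymp"
begin

(* In R_n the centre is 0, the leaves of the star are 1..n-2 and the pendant vertex n-1 hangs
   at leaf 1. If a 1-nearly independent set S contains 0, it contains exactly one leaf i and not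
   both 1 and n-1, so S is {0,1}, {0,i} or {0,i,n-1} with 2 <= i <= n-2. Otherwise its edge is
   {1,n-1} and S adds an arbitrary subset of the n-3 leaves 2..n-2. Counting gives
   sigma_1 = 2n-5+2^(n-3) and 2 S_1 = 10n-26+(n+1) 2^(n-3); everything else is real arithmetic.
   The lower bound n/2 amounts to 2^(n-4) > n^2 - 15n/2 + 13, which fails exactly for n = 6,7,8. *)

lemma sum_card_Pow:
  assumes "finite A"
  shows "2 * (\<Sum>T\<in>Pow A. card T) = card A * 2 ^ card A"
proof -
  have "(\<Sum>T\<in>Pow A. card (A - T)) = (\<Sum>T\<in>Pow A. card T)"
    by (rule sum.reindex_bij_witness[where i = "\<lambda>T. A - T" and j = "\<lambda>T. A - T"]) auto
  moreover have "(\<Sum>T\<in>Pow A. card T + card (A - T)) = (\<Sum>T\<in>Pow A. card A)"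
    using assms by (intro sum.cong) (auto simp: card_Diff_subset card_mono finite_subset)
  ultimately show ?thesis
    using assms by (simp add: sum.distrib card_Pow mult_2 mult.commute)
qed

lemma sum_card_union_Pow:
  assumes "finite B" "finite A" "B \<inter> A = {}"
  shows "2 * (\<Sum>T\<in>Pow A. card (B \<union> T)) = (card A + 2 * card B) * 2 ^ card A"
proof -
  have "(\<Sum>T\<in>Pow A. card (B \<union> T)) = (\<Sum>T\<in>Pow A. card B + card T)"
    using assms by (intro sum.cong refl card_Un_disjoint) (auto intro: finite_subset)
  then show ?thesis
    using sum_card_Pow[OF assms(2)] assms(2) by (simp add: sum.distrib card_Pow algebra_simps)
qed

lemma induced_edges_R_edges:
  assumes "n \<ge> 4"
  shows "induced_edges (R_edges n) S =
    (if 0 \<in> S then (\<lambda>i. {0, i}) ` ({1..n-2} \<inter> S) else {}) \<union>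
    (if 1 \<in> S \<and> n-1 \<in> S then {{1, n-1}} else {})"
  using assms unfolding induced_edges_def R_edges_def by (auto simp: doubleton_eq_iff)

lemma card_induced_edges_R_edges:
  assumes "n \<ge> 4"
  shows "card (induced_edges (R_edges n) S) =
    (if 0 \<in> S then card ({1..n-2} \<inter> S) else 0) + (if 1 \<in> S \<and> n-1 \<in> S then 1 else 0)"
proof -
  have "inj_on (\<lambda>i. {0::nat, i}) ({1..n-2} \<inter> S)"
    by (auto simp: inj_on_def doubleton_eq_iff)
  moreover have "{1, n-1} \<notin> (\<lambda>i. {0::nat, i}) ` ({1..n-2} \<inter> S)"
    using assms by (auto simp: doubleton_eq_iff)
  ultimately show ?thesis
    unfolding induced_edges_R_edges[OF assms] by (auto simp: card_image)
qed

lemma nearly_indep_sets1_R_center_iff: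
  assumes n: "n \<ge> 4" and S: "S \<subseteq> {0..<n}" "0 \<in> S"
  shows "S \<in> nearly_indep_sets1 (R_vertices n) (R_edges n) \<longleftrightarrow>
    (\<exists>i. {1..n-2} \<inter> S = {i}) \<and> \<not> (1 \<in> S \<and> n-1 \<in> S)"
proof -
  have "S \<in> nearly_indep_sets1 (R_vertices n) (R_edges n) \<longleftrightarrow>
      card ({1..n-2} \<inter> S) + (if 1 \<in> S \<and> n-1 \<in> S then 1 else 0) = 1"
    using S by (simp add: nearly_indep_sets1_def R_vertices_def card_induced_edges_R_edges[OF n])
  moreover have "card ({1..n-2} \<inter> S) \<noteq> 0" if "1 \<in> S"
  proof -
    from that n have "1 \<in> {1..n-2} \<inter> S"
      by simp
    then show ?thesis
      by auto
  qed
  ultimately show ?thesis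
    by (auto simp: card_1_singleton_iff)
qed

lemma nearly_indep_sets1_R_center:
  assumes n: "n \<ge> 4"
  shows "{S \<in> nearly_indep_sets1 (R_vertices n) (R_edges n). 0 \<in> S} =
    insert {0, 1} ((\<lambda>i. {0, i}) ` {2..n-2} \<union> (\<lambda>i. {0, i, n-1}) ` {2..n-2})"
proof (intro set_eqI iffI)
  fix S assume "S \<in> {S \<in> nearly_indep_sets1 (R_vertices n) (R_edges n). 0 \<in> S}"
  then have S: "S \<subseteq> {0..<n}" "0 \<in> S" and "S \<in> nearly_indep_sets1 (R_vertices n) (R_edges n)"
    by (auto simp: nearly_indep_sets1_def R_vertices_def)
  then obtain i where i: "{1..n-2} \<inter> S = {i}" and no_pendant_edge: "\<not> (1 \<in> S \<and> n-1 \<in> S)"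
    using nearly_indep_sets1_R_center_iff[OF n S] by blast
  from i have i_leaf: "1 \<le> i" "i \<le> n-2" "i \<in> S"
    by auto
  have "{0..<n} = {0, n-1} \<union> {1..n-2}"
    using n by auto
  with S(1) i have S_sub: "S \<subseteq> {0, i, n-1}"
    by blast
  show "S \<in> insert {0, 1} ((\<lambda>i. {0, i}) ` {2..n-2} \<union> (\<lambda>i. {0, i, n-1}) ` {2..n-2})"
  proof (cases "i = 1")
    case True
    with no_pendant_edge i_leaf have "n-1 \<notin> S"
      by simp
    with S_sub S(2) i_leaf True have "S = {0, 1}"
      by blast
    then show ?thesis
      by simp
  next
    case False
    with i_leaf have "i \<in> {2..n-2}"
      by simp
    moreover from S_sub S(2) i_leaf(3) have "S = {0, i} \<or> S = {0, i, n-1}"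
      by blast
    ultimately show ?thesis
      by blast
  qed
next
  fix S assume "S \<in> insert {0, 1} ((\<lambda>i. {0, i}) ` {2..n-2} \<union> (\<lambda>i. {0, i, n-1}) ` {2..n-2})"
  then consider "S = {0, 1}"
    | i where "i \<in> {2..n-2}" "S = {0, i}"
    | i where "i \<in> {2..n-2}" "S = {0, i, n-1}"
    by blast
  then obtain i where "{1..n-2} \<inter> S = {i}" "\<not> (1 \<in> S \<and> n-1 \<in> S)" "S \<subseteq> {0..<n}" "0 \<in> S"
  proof cases
    case 1
    with n show ?thesis
      by (intro that[of 1]) auto
  next
    case (2 i)
    with n show ?thesis
      by (intro that[of i]) auto
  next
    case (3 i)
    with n show ?thesis
      by (intro that[of i]) auto
  qed
  then show "S \<in> {S \<in> nearly_indep_sets1 (R_vertices n) (R_edges n). 0 \<in> S}"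
    using nearly_indep_sets1_R_center_iff[OF n] by blast
qed

lemma nearly_indep_sets1_R_no_center:
  assumes n: "n \<ge> 4"
  shows "{S \<in> nearly_indep_sets1 (R_vertices n) (R_edges n). 0 \<notin> S} =
    (\<lambda>T. {1, n-1} \<union> T) ` Pow {2..n-2}"
proof (intro set_eqI iffI)
  fix S assume "S \<in> {S \<in> nearly_indep_sets1 (R_vertices n) (R_edges n). 0 \<notin> S}"
  then have S: "S \<subseteq> {0..<n}" "0 \<notin> S" and "card (induced_edges (R_edges n) S) = 1"
    by (simp_all add: nearly_indep_sets1_def R_vertices_def)
  then have "(if 1 \<in> S \<and> n-1 \<in> S then 1 else 0) = (1::nat)"
    by (simp only: card_induced_edges_R_edges[OF n] if_False add_0_left)
  then have "1 \<in> S \<and> n-1 \<in> S"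
    by (rule contrapos_pp) (simp only: if_False zero_neq_one not_False_eq_True)
  then have "S = {1, n-1} \<union> (S - {1, n-1})"
    by blast
  moreover have "S - {1, n-1} \<subseteq> {2..n-2}"
  proof
    fix x assume x: "x \<in> S - {1, n-1}"
    then have "x \<in> S" "x \<noteq> 1" "x \<noteq> n-1"
      by simp_all
    moreover from \<open>x \<in> S\<close> S(2) have "x \<noteq> 0"
      by metis
    moreover from \<open>x \<in> S\<close> S(1) have "x < n"
      by auto
    ultimately show "x \<in> {2..n-2}"
      by simp
  qed
  ultimately show "S \<in> (\<lambda>T. {1, n-1} \<union> T) ` Pow {2..n-2}"
    unfolding image_iff Pow_iff by blast
next
  fix S assume "S \<in> (\<lambda>T. {1, n-1} \<union> T) ` Pow {2..n-2}"
  then obtain T where T: "T \<subseteq> {2..n-2}" "S = {1, n-1} \<union> T"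
    by blast
  moreover have "{2..n-2} \<subseteq> {0..<n}"
    by auto
  ultimately have "S \<subseteq> {0..<n}" "0 \<notin> S" "1 \<in> S" "n-1 \<in> S"
    using n by auto
  then show "S \<in> {S \<in> nearly_indep_sets1 (R_vertices n) (R_edges n). 0 \<notin> S}"
    by (simp add: nearly_indep_sets1_def R_vertices_def card_induced_edges_R_edges[OF n])
qed

lemma sum_nearly_indep_sets1_R_center:
  assumes n: "n \<ge> 4"
  shows "(\<Sum>S\<in>{S \<in> nearly_indep_sets1 (R_vertices n) (R_edges n). 0 \<in> S}. f S) =
    f {0, 1} + (\<Sum>i\<in>{2..n-2}. f {0, i} + f {0, i, n-1})"
proof -
  let ?L = "{2..n-2}"
  have inj_pair: "inj_on (\<lambda>i. {0, i}) ?L"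
    by (auto simp: inj_on_def doubleton_eq_iff)
  have inj_triple: "inj_on (\<lambda>i. {0, i, n-1}) ?L"
  proof (rule inj_onI)
    fix i j assume "i \<in> ?L" "{0, i, n-1} = {0, j, n-1}"
    then have "i \<in> {0, j, n-1}"
      by blast
    moreover have "i \<noteq> 0" "i \<noteq> n-1"
      using \<open>i \<in> ?L\<close> by auto
    ultimately show "i = j"
      by blast
  qed
  have "\<forall>S \<in> (\<lambda>i. {0, i}) ` ?L. 1 \<notin> S \<and> n-1 \<notin> S"
    and "\<forall>S \<in> (\<lambda>i. {0, i, n-1}) ` ?L. 1 \<notin> S \<and> n-1 \<in> S"
    using n by auto
  then have "{0, 1} \<notin> (\<lambda>i. {0, i}) ` ?L \<union> (\<lambda>i. {0, i, n-1}) ` ?L"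
    and "(\<lambda>i. {0, i}) ` ?L \<inter> (\<lambda>i. {0, i, n-1}) ` ?L = {}"
    by blast+
  with inj_pair inj_triple show ?thesis
    by (simp add: nearly_indep_sets1_R_center[OF n] sum.union_disjoint sum.reindex sum.distrib)
qed

lemma sum_nearly_indep_sets1_R_no_center:
  assumes n: "n \<ge> 4"
  shows "(\<Sum>S\<in>{S \<in> nearly_indep_sets1 (R_vertices n) (R_edges n). 0 \<notin> S}. f S) =
    (\<Sum>T\<in>Pow {2..n-2}. f ({1, n-1} \<union> T))"
proof -
  have "{1, n-1} \<inter> {2..n-2} = {}"
    using n by auto
  then have "inj_on (\<lambda>T. {1, n-1} \<union> T) (Pow {2..n-2})"
    by (intro inj_onI) blast
  then show ?thesis
    by (simp add: nearly_indep_sets1_R_no_center[OF n] sum.reindex)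
qed

lemma sum_nearly_indep_sets1_R:
  assumes n: "n \<ge> 4"
  shows "(\<Sum>S\<in>nearly_indep_sets1 (R_vertices n) (R_edges n). f S) =
    f {0, 1} + (\<Sum>i\<in>{2..n-2}. f {0, i} + f {0, i, n-1}) + (\<Sum>T\<in>Pow {2..n-2}. f ({1, n-1} \<union> T))"
proof -
  let ?N = "nearly_indep_sets1 (R_vertices n) (R_edges n)"
  have "finite ?N"
    by (rule finite_subset[of _ "Pow {0..<n}"]) (auto simp: nearly_indep_sets1_def R_vertices_def)
  then have "(\<Sum>S\<in>?N. f S) = (\<Sum>S\<in>{S \<in> ?N. 0 \<in> S}. f S) + (\<Sum>S\<in>{S \<in> ?N. 0 \<notin> S}. f S)"
    by (subst sum.union_disjoint[symmetric]) (auto intro: sum.cong)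
  then show ?thesis
    by (simp add: sum_nearly_indep_sets1_R_center[OF n] sum_nearly_indep_sets1_R_no_center[OF n])
qed

lemma sigma1_R:
  assumes "n \<ge> 4"
  shows "sigma1 (R_vertices n) (R_edges n) = 2 * n - 5 + 2 ^ (n - 3)"
proof -
  have "sigma1 (R_vertices n) (R_edges n) = 1 + (\<Sum>i\<in>{2..n-2}. 1 + 1) + (\<Sum>T\<in>Pow {2..n-2}. 1)"
    unfolding sigma1_def card_eq_sum by (rule sum_nearly_indep_sets1_R[OF assms])
  then show ?thesis
    using assms by (simp add: card_Pow)
qed

lemma S1_R:
  assumes "n \<ge> 4"
  shows "2 * S1 (R_vertices n) (R_edges n) = 10 * n - 26 + (n + 1) * 2 ^ (n - 3)"
proof -
  let ?L = "{2..n-2}"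
  have S1_eq: "S1 (R_vertices n) (R_edges n) = card {0::nat, 1}
      + (\<Sum>i\<in>?L. card {0, i} + card {0, i, n-1}) + (\<Sum>T\<in>Pow ?L. card ({1, n-1} \<union> T))"
    unfolding S1_def by (rule sum_nearly_indep_sets1_R[OF assms])
  have "(\<Sum>i\<in>?L. card {0, i} + card {0, i, n-1}) = (\<Sum>i\<in>?L. 5)"
    by (intro sum.cong) auto
  then have star: "(\<Sum>i\<in>?L. card {0, i} + card {0, i, n-1}) = 5 * (n - 3)"
    by simp
  have "{1, n-1} \<inter> ?L = {}" "card {1, n-1} = 2" "card ?L = n - 3"
    using assms by auto
  then have pendant: "2 * (\<Sum>T\<in>Pow ?L. card ({1, n-1} \<union> T)) = (n + 1) * 2 ^ (n - 3)"
    using assms sum_card_union_Pow[of "{1, n-1}" ?L] by simp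
  show ?thesis
    unfolding S1_eq star using pendant assms by simp linarith
qed

lemma power_diff_3:
  fixes x :: "'a::monoid_mult"
  assumes "n \<ge> 4"
  shows "x ^ (n - 3) = x * x ^ (n - 4)"
proof -
  from assms have "n - 3 = Suc (n - 4)"
    by simp
  then show ?thesis
    by simp
qed

lemma R_denominator_pos:
  assumes "n \<ge> 3"
  shows "2 * real n - 5 + 2 ^ (n - 3) > 0"
  using assms by (simp add: add_pos_pos)

lemma av1_R:
  assumes "n \<ge> 4"
  shows "av1 (R_vertices n) (R_edges n)
    = (5 * real n - 13 + (real n + 1) * 2 ^ (n - 4)) / (2 * real n - 5 + 2 ^ (n - 3))"
proof -
  have "real (sigma1 (R_vertices n) (R_edges n)) = 2 * real n - 5 + 2 ^ (n - 3)"
    using assms by (simp add: sigma1_R of_nat_diff)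
  moreover have "real (2 * S1 (R_vertices n) (R_edges n)) = 10 * real n - 26 + (real n + 1) * 2 ^ (n - 3)"
    using assms by (simp only: S1_R) (simp add: of_nat_diff algebra_simps)
  ultimately show ?thesis
    by (simp add: av1_def power_diff_3[OF assms])
qed

lemma av1_R_eq_half_succ_minus:
  assumes "n \<ge> 4"
  shows "av1 (R_vertices n) (R_edges n)
    = (real n + 1) / 2 - (real n ^ 2 - 13 / 2 * real n + 21 / 2) / (2 * real n - 5 + 2 ^ (n - 3))"
  using assms R_denominator_pos[of n] unfolding av1_R[OF assms] power_diff_3[OF assms]
  by (simp add: field_simps power2_eq_square)

lemma av1_R_eq_half_plus:
  assumes "n \<ge> 4"
  shows "av1 (R_vertices n) (R_edges n)
    = real n / 2 + (2 ^ (n - 4) - real n ^ 2 + 15 / 2 * real n - 13) / (2 * real n - 5 + 2 ^ (n - 3))"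
  using assms R_denominator_pos[of n] unfolding av1_R[OF assms] power_diff_3[OF assms]
  by (simp add: field_simps power2_eq_square)

lemma square_add_self_le_two_power:
  fixes k :: nat
  assumes "k \<ge> 5"
  shows "k ^ 2 + k \<le> 2 ^ k"
  using assms
proof (induction k rule: dec_induct)
  case base
  then show ?case by simp
next
  case (step k)
  have "k + 2 \<le> k * k"
    using mult_le_mono1[of 5 k k] step.hyps(1) by linarith
  then have "(k + 1) ^ 2 + (k + 1) \<le> 2 * (k ^ 2 + k)"
    by (simp add: power2_eq_square algebra_simps)
  also have "\<dots> \<le> 2 ^ Suc k"
    using step.IH by simp
  finally show ?case
    by simp
qed

lemma av1_R_less:
  assumes "n \<ge> 4"
  shows "av1 (R_vertices n) (R_edges n) < (real n + 1) / 2"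
proof -
  have "(real n ^ 2 - 13 / 2 * real n + 21 / 2) / (2 * real n - 5 + 2 ^ (n - 3)) > 0"
  proof (rule divide_pos_pos)
    have "real n ^ 2 - 13 / 2 * real n + 21 / 2 = (real n - 3) * (real n - 7 / 2)"
      by (simp add: power2_eq_square field_simps)
    also have "\<dots> > 0"
      using assms by simp
    finally show "real n ^ 2 - 13 / 2 * real n + 21 / 2 > 0" .
    show "2 * real n - 5 + 2 ^ (n - 3) > 0"
      using assms by (simp add: R_denominator_pos)
  qed
  then show ?thesis
    unfolding av1_R_eq_half_succ_minus[OF assms] by linarith
qed

lemma av1_R_greater:
  assumes "n \<ge> 4" "n \<notin> {6, 7, 8}"
  shows "av1 (R_vertices n) (R_edges n) > real n / 2"
proof -
  have "2 ^ (n - 4) - real n ^ 2 + 15 / 2 * real n - 13 > 0"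
  proof (cases "n \<ge> 9")
    case True
    define k where "k = n - 4"
    with True have n: "n = k + 4" and "k \<ge> 5"
      by simp_all
    then have "real (k ^ 2 + k) \<le> real (2 ^ k)"
      using square_add_self_le_two_power of_nat_mono by blast
    then have "real k ^ 2 + real k \<le> 2 ^ k"
      by simp
    moreover have "2 ^ (n - 4) - real n ^ 2 + 15 / 2 * real n - 13
        = 2 ^ k - (real k ^ 2 + real k) + real k / 2 + 1"
      unfolding n by (simp add: power2_eq_square field_simps)
    ultimately show ?thesis
      using of_nat_0_le_iff[of k] by linarith
  next
    case False
    with assms have "n = 4 \<or> n = 5"
      by auto
    then show ?thesis
      by auto
  qed
  moreover have "2 * real n - 5 + 2 ^ (n - 3) > 0"
    using assms by (simp add: R_denominator_pos)
  ultimately show ?thesis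
    unfolding av1_R_eq_half_plus[OF assms(1)] by simp
qed

lemma av1_R_tendsto:
  "(\<lambda>n. av1 (R_vertices n) (R_edges n) - (real n + 1) / 2) \<longlonglongrightarrow> 0"
proof -
  have "\<forall>\<^sub>F n in sequentially. av1 (R_vertices n) (R_edges n) - (real n + 1) / 2
      = - ((real n ^ 2 - 13 / 2 * real n + 21 / 2) / (2 * real n - 5 + 2 ^ (n - 3)))"
    using eventually_ge_at_top[of 4] by eventually_elim (simp add: av1_R_eq_half_succ_minus)
  moreover have "(\<lambda>n. - ((real n ^ 2 - 13 / 2 * real n + 21 / 2) / (2 * real n - 5 + 2 ^ (n - 3))))
      \<longlonglongrightarrow> 0"
    by real_asymp
  ultimately show ?thesis
    by (simp add: tendsto_cong)
qed

theorem mainTheorem12: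
  shows "(\<forall>n::nat. n \<ge> 4 \<longrightarrow>
            av1 (R_vertices n) (R_edges n)
              = (5 * real n - 13 + (real n + 1) * 2 ^ (n - 4)) / (2 * real n - 5 + 2 ^ (n - 3))
          \<and> av1 (R_vertices n) (R_edges n)
              = (real n + 1) / 2 - (real n ^ 2 - 13 / 2 * real n + 21 / 2) / (2 * real n - 5 + 2 ^ (n - 3))
          \<and> av1 (R_vertices n) (R_edges n)
              = real n / 2 + (2 ^ (n - 4) - real n ^ 2 + 15 / 2 * real n - 13) / (2 * real n - 5 + 2 ^ (n - 3)))
      \<and> (\<forall>n::nat. n \<ge> 4 \<longrightarrow> av1 (R_vertices n) (R_edges n) < (real n + 1) / 2)
      \<and> (\<forall>n::nat. n \<ge> 4 \<and> n \<notin> {6, 7, 8} \<longrightarrow> av1 (R_vertices n) (R_edges n) > real n / 2)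
      \<and> ((\<lambda>n. av1 (R_vertices n) (R_edges n) - (real n + 1) / 2) \<longlonglongrightarrow> 0)"
  using av1_R av1_R_eq_half_succ_minus av1_R_eq_half_plus av1_R_less av1_R_greater av1_R_tendsto
  by blast

end
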